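(* Let $\mathbb{K}\in\{\mathbb{R},\mathbb{C}\}$ and let $\mathcal{X}$ be a topological $\mathbb{K}$-vector space whose topological dual $\mathcal{X}^{\ast}$ separates the points of $\mathcal{X}$. Then the map $\overline{\mathrm{co}}:\mathbf{F}(\mathcal{X}^{\ast})\to\mathbf{CF}(\mathcal{X}^{\ast})$, $F\mapsto\overline{\mathrm{co}}F$, is surjective and continuous, both spaces being endowed with the weak*-Hausdorff hypertopology.
   Context: Topological vector spaces are Hausdorff. $\mathcal{X}^{\ast}$ carries the weak* topology. $\mathbf{F}(\mathcal{X}^{\ast})$ is the set of nonempty weak*-closed subsets of $\mathcal{X}^{\ast}$, $\mathbf{CF}(\mathcal{X}^{\ast})$ the subset of convex ones, and $\overline{\mathrm{co}}F$ is the weak*-closure of the convex hull of $F$. The weak*-Hausdorff hypertopology on $\mathbf{F}(\mathcal{X}^{\ast})$ (and its subspaces) is the topology generated by the extended pseudometrics $d_H^{(A)}(F,\tilde F)=\max\{\sup_{\sigma\in F}\inf_{\tilde\sigma\in\tilde F}|(\sigma-\tilde\sigma)(A)|,\ \sup_{\tilde\sigma\in\tilde F}\inf_{\sigma\in F}|(\sigma-\tilde\sigma)(A)|\}\in[0,\infty]$, $A\in\mathcal{X}$. *)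

theory Defs
  imports "HOL-Analysis.Analysis"
begin

text \<open>Topological K-vector space structure on a type 'x whose (Hausdorff) topology is
  the class topology and whose additive group is the class group, with scalar
  multiplication smul over the scalar field 'k (instantiated with real / complex).\<close>

definition tvs :: "('k::real_normed_field \<Rightarrow> 'x::{ab_group_add,t2_space} \<Rightarrow> 'x) \<Rightarrow> bool" where
  "tvs smul \<longleftrightarrow>
     (\<forall>a x y. smul a (x + y) = smul a x + smul a y) \<and>
     (\<forall>a b x. smul (a + b) x = smul a x + smul b x) \<and>
     (\<forall>a b x. smul a (smul b x) = smul (a * b) x) \<and>
     (\<forall>x. smul 1 x = x) \<and>
     continuous_on UNIV (\<lambda>p::'x \<times> 'x. fst p + snd p) \<and>
     continuous_on UNIV (\<lambda>p::'k \<times> 'x. smul (fst p) (snd p))"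

definition tdual :: "('k::real_normed_field \<Rightarrow> 'x::{ab_group_add,t2_space} \<Rightarrow> 'x) \<Rightarrow> ('x \<Rightarrow> 'k) set" where
  "tdual smul = {\<sigma>. (\<forall>x y. \<sigma> (x + y) = \<sigma> x + \<sigma> y) \<and> (\<forall>a x. \<sigma> (smul a x) = a * \<sigma> x)
                     \<and> continuous_on UNIV \<sigma>}"

definition dual_separates :: "('k::real_normed_field \<Rightarrow> 'x::{ab_group_add,t2_space} \<Rightarrow> 'x) \<Rightarrow> bool" where
  "dual_separates smul \<longleftrightarrow> (\<forall>x y. x \<noteq> y \<longrightarrow> (\<exists>\<sigma>\<in>tdual smul. \<sigma> x \<noteq> \<sigma> y))"

definition weak_star :: "('k::real_normed_field \<Rightarrow> 'x::{ab_group_add,t2_space} \<Rightarrow> 'x) \<Rightarrow> ('x \<Rightarrow> 'k) topology" where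
  "weak_star smul = subtopology (product_topology (\<lambda>_. euclidean) UNIV) (tdual smul)"

definition fconvex :: "('x \<Rightarrow> 'k::real_normed_field) set \<Rightarrow> bool" where
  "fconvex C \<longleftrightarrow> (\<forall>\<sigma>\<in>C. \<forall>\<tau>\<in>C. \<forall>t::real. 0 \<le> t \<and> t \<le> 1 \<longrightarrow>
       (\<lambda>x. of_real t * \<sigma> x + of_real (1 - t) * \<tau> x) \<in> C)"

definition dual_co :: "('k::real_normed_field \<Rightarrow> 'x::{ab_group_add,t2_space} \<Rightarrow> 'x) \<Rightarrow> ('x \<Rightarrow> 'k) set \<Rightarrow> ('x \<Rightarrow> 'k) set" where
  "dual_co smul F = \<Inter>{C. C \<subseteq> tdual smul \<and> fconvex C \<and> F \<subseteq> C}"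

definition clco :: "('k::real_normed_field \<Rightarrow> 'x::{ab_group_add,t2_space} \<Rightarrow> 'x) \<Rightarrow> ('x \<Rightarrow> 'k) set \<Rightarrow> ('x \<Rightarrow> 'k) set" where
  "clco smul F = (weak_star smul) closure_of (dual_co smul F)"

definition Fsets :: "('k::real_normed_field \<Rightarrow> 'x::{ab_group_add,t2_space} \<Rightarrow> 'x) \<Rightarrow> ('x \<Rightarrow> 'k) set set" where
  "Fsets smul = {F. F \<noteq> {} \<and> closedin (weak_star smul) F}"

definition CFsets :: "('k::real_normed_field \<Rightarrow> 'x::{ab_group_add,t2_space} \<Rightarrow> 'x) \<Rightarrow> ('x \<Rightarrow> 'k) set set" where
  "CFsets smul = {F. F \<in> Fsets smul \<and> fconvex F}"

definition dH :: "'x \<Rightarrow> ('x \<Rightarrow> 'k::real_normed_field) set \<Rightarrow> ('x \<Rightarrow> 'k) set \<Rightarrow> ereal" where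
  "dH A F G = max (SUP \<sigma>\<in>F. INF \<tau>\<in>G. ereal (norm (\<sigma> A - \<tau> A)))
                  (SUP \<tau>\<in>G. INF \<sigma>\<in>F. ereal (norm (\<sigma> A - \<tau> A)))"

definition hyper_top :: "('x \<Rightarrow> 'k::real_normed_field) set set \<Rightarrow> ('x \<Rightarrow> 'k) set topology" where
  "hyper_top S = topology_generated_by
     {{G \<in> S. dH A F G < ereal \<epsilon>} | F A \<epsilon>. F \<in> S \<and> \<epsilon> > 0}"

end

theory Submission
  imports Defs
begin

(* Evaluation at a point A maps a set F of functionals to the set F(A) of scalars, and
   d_H^(A)(F, G) is the Hausdorff distance of F(A) and G(A). Since the weak* topology is
   the topology of pointwise convergence, {\<sigma>. \<sigma> A \<in> K} is weak*-closed and convex for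
   every closed convex K, so the evaluation of the weak*-closed convex hull of F lies in
   the closed convex hull of F(A) and contains the convex hull of F(A). Passing to closed
   convex hulls does not increase the excess of one set of scalars over another, hence
   d_H^(A)(co F, co G) <= d_H^(A)(F, G) for every A: the map is nonexpansive for each
   generating pseudometric and therefore continuous. It fixes every nonempty
   weak*-closed convex set, which gives surjectivity. *)

(* Note that excess {} Q = -\<infinity>, the supremum of the empty set. *)
definition excess :: "'a::metric_space set \<Rightarrow> 'a set \<Rightarrow> ereal" where
  "excess P Q = (SUP a\<in>P. INF b\<in>Q. ereal (dist a b))"

lemma INF_dist_eq_infdist:
  fixes Q :: "'a::metric_space set"
  assumes "Q \<noteq> {}"
  shows "(INF b\<in>Q. ereal (dist a b)) = ereal (infdist a Q)"
proof -
  have "ereal (Inf (dist a ` Q)) = (INF x\<in>dist a ` Q. ereal x)"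
    by (rule ereal_Inf') (use assms in auto)
  then show ?thesis
    using assms by (simp add: infdist_notempty image_comp o_def)
qed

lemma excess_eq_SUP_infdist: "Q \<noteq> {} \<Longrightarrow> excess P Q = (SUP a\<in>P. ereal (infdist a Q))"
  unfolding excess_def by (simp add: INF_dist_eq_infdist)

lemma excess_nonneg:
  assumes "a \<in> P" shows "0 \<le> excess P Q"
  unfolding excess_def by (rule SUP_upper2[OF assms]) (simp add: INF_greatest)

lemma excess_self_le: "excess P P \<le> 0"
  unfolding excess_def by (auto intro!: SUP_least INF_lower2 simp: zero_ereal_def)

lemma excess_mono: "P' \<subseteq> P \<Longrightarrow> Q \<subseteq> Q' \<Longrightarrow> excess P' Q' \<le> excess P Q"
  unfolding excess_def by (intro SUP_subset_mono INF_superset_mono) auto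

lemma excess_empty_right: "P \<noteq> {} \<Longrightarrow> excess P {} = \<infinity>"
  by (simp add: excess_def top_ereal_def)

lemma infdist_le_plus_excess:
  fixes Q R :: "'a::metric_space set"
  assumes "Q \<noteq> {}" "R \<noteq> {}" "excess Q R \<le> ereal q"
  shows "infdist a R \<le> infdist a Q + q"
proof -
  have "infdist a R - q \<le> infdist a Q"
    unfolding infdist_notempty[OF assms(1)]
  proof (rule cINF_greatest[OF assms(1)])
    fix b assume "b \<in> Q"
    then have "ereal (infdist b R) \<le> excess Q R"
      unfolding excess_eq_SUP_infdist[OF assms(2)] by (rule SUP_upper)
    then have "infdist b R \<le> q"
      using assms(3) by (metis ereal_less_eq(3) order_trans)
    with infdist_triangle[of a R b] show "infdist a R - q \<le> dist a b" by simp
  qed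
  then show ?thesis by simp
qed

lemma excess_triangle:
  fixes P Q R :: "'a::metric_space set"
  assumes "Q \<noteq> {}"
  shows "excess P R \<le> excess P Q + excess Q R"
proof (cases "P = {}")
  case True
  then show ?thesis by (simp add: excess_def)
next
  case False
  then obtain p where "p \<in> P" by auto
  show ?thesis
  proof (cases "excess Q R = \<infinity>")
    case True
    then show ?thesis using excess_nonneg[OF \<open>p \<in> P\<close>, of Q] by simp
  next
    case False
    then have "R \<noteq> {}" using excess_empty_right[OF assms] by auto
    from assms obtain q0 where "q0 \<in> Q" by auto
    with False obtain q where q: "excess Q R = ereal q"
      using excess_nonneg[OF \<open>q0 \<in> Q\<close>, of R] by (cases "excess Q R") auto
    have "ereal (infdist a R) \<le> excess P Q + ereal q" if "a \<in> P" for a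
    proof -
      have "ereal (infdist a R) \<le> ereal (infdist a Q) + ereal q"
        using infdist_le_plus_excess[OF assms \<open>R \<noteq> {}\<close>] q by simp
      also have "ereal (infdist a Q) \<le> excess P Q"
        unfolding excess_eq_SUP_infdist[OF assms] using \<open>a \<in> P\<close> by (rule SUP_upper)
      finally show ?thesis by (simp add: add_right_mono)
    qed
    then have "excess P R \<le> excess P Q + ereal q"
      unfolding excess_eq_SUP_infdist[OF \<open>R \<noteq> {}\<close>, of P] by (rule SUP_least)
    with q show ?thesis by simp
  qed
qed

lemma convex_infdist_le:
  fixes C :: "'a::real_normed_vector set"
  assumes "convex C" "C \<noteq> {}"
  shows "convex {x. infdist x C \<le> d}"
proof (rule convexI)
  fix x y :: 'a and u v :: real
  assume x: "x \<in> {x. infdist x C \<le> d}" and y: "y \<in> {x. infdist x C \<le> d}"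
    and uv: "0 \<le> u" "0 \<le> v" "u + v = 1"
  have near: "\<exists>b\<in>C. dist z b < d + e" if "infdist z C \<le> d" "e > 0" for z e
  proof -
    have "(INF b\<in>C. dist z b) < d + e"
      using that by (simp add: infdist_notempty[OF assms(2)])
    then show ?thesis
      using assms(2) by (subst (asm) cINF_less_iff) auto
  qed
  have "infdist (u *\<^sub>R x + v *\<^sub>R y) C \<le> d + e" if "e > 0" for e
  proof -
    obtain b1 where b1: "b1 \<in> C" "dist x b1 < d + e"
      using near x \<open>e > 0\<close> by blast
    obtain b2 where b2: "b2 \<in> C" "dist y b2 < d + e"
      using near y \<open>e > 0\<close> by blast
    have "infdist (u *\<^sub>R x + v *\<^sub>R y) C \<le> dist (u *\<^sub>R x + v *\<^sub>R y) (u *\<^sub>R b1 + v *\<^sub>R b2)"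
      using convexD[OF assms(1) b1(1) b2(1) uv] by (rule infdist_le)
    also have "\<dots> = norm (u *\<^sub>R (x - b1) + v *\<^sub>R (y - b2))"
      by (simp add: dist_norm algebra_simps)
    also have "\<dots> \<le> u * dist x b1 + v * dist y b2"
      using norm_triangle_ineq[of "u *\<^sub>R (x - b1)" "v *\<^sub>R (y - b2)"] uv by (simp add: dist_norm)
    also have "\<dots> \<le> u * (d + e) + v * (d + e)"
      using b1 b2 uv by (intro add_mono mult_left_mono) auto
    also have "\<dots> = d + e"
      using uv by (simp add: distrib_right[symmetric])
    finally show ?thesis .
  qed
  then show "u *\<^sub>R x + v *\<^sub>R y \<in> {x. infdist x C \<le> d}"
    by (simp add: field_le_epsilon)
qed

lemma excess_closure_convex_hull_le:
  fixes P Q :: "'a::real_normed_vector set"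
  shows "excess (closure (convex hull P)) (convex hull Q) \<le> excess P Q"
proof (cases "P = {}")
  case True
  then show ?thesis by (simp add: excess_def)
next
  case False
  then obtain p where "p \<in> P" by auto
  show ?thesis
  proof (cases "Q = {} \<or> excess P Q = \<infinity>")
    case True
    then show ?thesis using excess_empty_right[OF \<open>P \<noteq> {}\<close>] by auto
  next
    case False
    then have "Q \<noteq> {}" by auto
    from False obtain d where d: "excess P Q = ereal d"
      using excess_nonneg[OF \<open>p \<in> P\<close>, of Q] by (cases "excess P Q") auto
    define K where "K = {x. infdist x (convex hull Q) \<le> d}"
    have "P \<subseteq> K"
    proof
      fix a assume "a \<in> P"
      then have "ereal (infdist a Q) \<le> ereal d"
        unfolding d[symmetric] excess_eq_SUP_infdist[OF \<open>Q \<noteq> {}\<close>] by (rule SUP_upper)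
      moreover have "infdist a (convex hull Q) \<le> infdist a Q"
        using \<open>Q \<noteq> {}\<close> by (intro infdist_mono hull_subset)
      ultimately show "a \<in> K" unfolding K_def by simp
    qed
    moreover have "convex K" "closed K"
      unfolding K_def using \<open>Q \<noteq> {}\<close>
      by (auto intro!: convex_infdist_le closed_Collect_le continuous_on_infdist continuous_on_id)
    ultimately have "closure (convex hull P) \<subseteq> K"
      by (intro closure_minimal hull_minimal)
    moreover have "convex hull Q \<noteq> {}" using \<open>Q \<noteq> {}\<close> by simp
    ultimately show ?thesis
      unfolding d by (subst excess_eq_SUP_infdist) (auto intro!: SUP_least simp: K_def)
  qed
qed

lemma dH_eq_max_excess:
  "dH A F G = max (excess ((\<lambda>\<sigma>. \<sigma> A) ` F) ((\<lambda>\<sigma>. \<sigma> A) ` G))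
                  (excess ((\<lambda>\<sigma>. \<sigma> A) ` G) ((\<lambda>\<sigma>. \<sigma> A) ` F))"
  unfolding dH_def excess_def by (simp add: image_comp o_def dist_norm norm_minus_commute)

lemma dH_self_le: "dH A F F \<le> 0"
  unfolding dH_eq_max_excess by (simp add: excess_self_le)

lemma dH_nonneg: "F \<noteq> {} \<Longrightarrow> 0 \<le> dH A F G"
  unfolding dH_eq_max_excess by (auto simp: le_max_iff_disj intro: excess_nonneg)

lemma dH_triangle:
  assumes "G \<noteq> {}"
  shows "dH A F H \<le> dH A F G + dH A G H"
proof -
  let ?e = "\<lambda>S. (\<lambda>\<sigma>. \<sigma> A) ` S"
  have G: "?e G \<noteq> {}" using assms by simp
  have "excess (?e F) (?e H) \<le> excess (?e F) (?e G) + excess (?e G) (?e H)"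
    by (rule excess_triangle[OF G])
  also have "\<dots> \<le> dH A F G + dH A G H"
    unfolding dH_eq_max_excess by (intro add_mono max.cobounded1)
  finally have FH: "excess (?e F) (?e H) \<le> dH A F G + dH A G H" .
  have "excess (?e H) (?e F) \<le> excess (?e G) (?e F) + excess (?e H) (?e G)"
    using excess_triangle[OF G, of "?e H" "?e F"] by (simp add: add.commute)
  also have "\<dots> \<le> dH A F G + dH A G H"
    unfolding dH_eq_max_excess by (intro add_mono max.cobounded2)
  finally show ?thesis
    using FH unfolding dH_eq_max_excess[of A F H] by simp
qed

lemma topspace_hyper_top [simp]: "topspace (hyper_top S) = S"
  unfolding hyper_top_def topology_generated_by_topspace
proof (intro equalityI subsetI)
  fix F assume "F \<in> S"
  let ?B = "{G \<in> S. dH undefined F G < ereal 1}"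
  have "F \<in> ?B"
    using \<open>F \<in> S\<close> dH_self_le[of undefined F] by (simp add: zero_ereal_def order_le_less_trans)
  moreover have "?B \<in> {{G \<in> S. dH A F G < ereal \<epsilon>} | F A \<epsilon>. F \<in> S \<and> \<epsilon> > 0}"
    using \<open>F \<in> S\<close> by (intro CollectI exI[of _ F] exI[of _ undefined] exI[of _ "1::real"]) simp
  ultimately show "F \<in> \<Union>{{G \<in> S. dH A F G < ereal \<epsilon>} | F A \<epsilon>. F \<in> S \<and> \<epsilon> > 0}"
    by (rule UnionI[rotated])
qed auto

lemma openin_hyper_top_ball:
  assumes "F \<in> S" "\<epsilon> > 0"
  shows "openin (hyper_top S) {G \<in> S. dH A F G < ereal \<epsilon>}"
  unfolding hyper_top_def
  by (rule topology_generated_by_Basis, rule CollectI, intro exI[of _ F] exI[of _ A] exI[of _ \<epsilon>])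
    (use assms in auto)

lemma continuous_map_hyper_top:
  assumes maps: "\<And>F. F \<in> S \<Longrightarrow> h F \<in> T" and nonempty: "{} \<notin> T"
    and nonexpansive: "\<And>F G A. F \<in> S \<Longrightarrow> G \<in> S \<Longrightarrow> dH A (h F) (h G) \<le> dH A F G"
  shows "continuous_map (hyper_top S) (hyper_top T) h"
  unfolding hyper_top_def[of T]
proof (rule continuous_on_generated_topo)
  fix U assume "U \<in> {{G \<in> T. dH A F G < ereal \<epsilon>} | F A \<epsilon>. F \<in> T \<and> \<epsilon> > 0}"
  then obtain C A \<epsilon> where U: "U = {G \<in> T. dH A C G < ereal \<epsilon>}" and "C \<in> T"
    by blast
  show "openin (hyper_top S) (h -` U \<inter> topspace (hyper_top S))"
  proof (subst openin_subopen, intro ballI)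
    fix F assume F: "F \<in> h -` U \<inter> topspace (hyper_top S)"
    then have "F \<in> S" "dH A C (h F) < ereal \<epsilon>" using U by auto
    moreover have "0 \<le> dH A C (h F)" using \<open>C \<in> T\<close> nonempty by (intro dH_nonneg) auto
    ultimately obtain r where r: "dH A C (h F) = ereal r" "r < \<epsilon>"
      by (cases "dH A C (h F)") auto
    define B where "B = {G \<in> S. dH A F G < ereal (\<epsilon> - r)}"
    have "openin (hyper_top S) B"
      unfolding B_def using \<open>F \<in> S\<close> r(2) by (intro openin_hyper_top_ball) auto
    moreover have "F \<in> B"
      using \<open>F \<in> S\<close> dH_self_le[of A F] r(2) by (simp add: B_def zero_ereal_def order_le_less_trans)
    moreover have "B \<subseteq> h -` U \<inter> topspace (hyper_top S)"
    proof
      fix G assume "G \<in> B"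
      then have "G \<in> S" and close: "dH A F G < ereal (\<epsilon> - r)" by (auto simp: B_def)
      have "dH A C (h G) \<le> dH A C (h F) + dH A (h F) (h G)"
        using maps[OF \<open>F \<in> S\<close>] nonempty by (intro dH_triangle) auto
      also have "\<dots> \<le> ereal r + dH A F G"
        using r(1) nonexpansive[OF \<open>F \<in> S\<close> \<open>G \<in> S\<close>] by (simp add: add_left_mono)
      also have "\<dots> < ereal \<epsilon>"
        using close by (cases "dH A F G") auto
      finally show "G \<in> h -` U \<inter> topspace (hyper_top S)"
        using \<open>G \<in> S\<close> maps[OF \<open>G \<in> S\<close>] U by auto
    qed
    ultimately show "\<exists>B. openin (hyper_top S) B \<and> F \<in> B \<and> B \<subseteq> h -` U \<inter> topspace (hyper_top S)"
      by blast
  qed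
next
  show "h ` topspace (hyper_top S) \<subseteq> \<Union>{{G \<in> T. dH A F G < ereal \<epsilon>} | F A \<epsilon>. F \<in> T \<and> \<epsilon> > 0}"
    using topspace_hyper_top[of T, unfolded hyper_top_def topology_generated_by_topspace] maps
    by auto
qed

lemma weak_star_eq_top_of_set: "weak_star smul = top_of_set (tdual smul)"
  unfolding weak_star_def euclidean_product_topology ..

lemma fconvex_tdual: "fconvex (tdual smul)"
  unfolding fconvex_def tdual_def by (auto simp: algebra_simps intro!: continuous_intros)

lemma fconvex_Int: "fconvex C \<Longrightarrow> fconvex D \<Longrightarrow> fconvex (C \<inter> D)"
  unfolding fconvex_def by blast

lemma fconvex_dual_co: "fconvex (dual_co smul F)"
  unfolding fconvex_def dual_co_def by blast

(* Without the hypothesis the family intersected in dual_co may be empty, making dual_co UNIV. *)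
lemma dual_co_subset_tdual: "F \<subseteq> tdual smul \<Longrightarrow> dual_co smul F \<subseteq> tdual smul"
  unfolding dual_co_def using fconvex_tdual by blast

lemma subset_dual_co: "F \<subseteq> dual_co smul F"
  unfolding dual_co_def by blast

lemma dual_co_minimal: "F \<subseteq> C \<Longrightarrow> C \<subseteq> tdual smul \<Longrightarrow> fconvex C \<Longrightarrow> dual_co smul F \<subseteq> C"
  unfolding dual_co_def by blast

lemma continuous_on_pointwise_combination:
  fixes c d :: "'k::real_normed_field"
  shows "continuous_on UNIV (\<lambda>p::('a \<Rightarrow> 'k) \<times> ('a \<Rightarrow> 'k). \<lambda>x. c * fst p x + d * snd p x)"
proof (rule continuous_on_coordinatewise_then_product)
  fix x
  have "continuous_on UNIV (\<lambda>p::('a \<Rightarrow> 'k) \<times> ('a \<Rightarrow> 'k). fst p x)"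
    by (rule continuous_on_compose2[OF continuous_on_product_coordinates]) (auto intro: continuous_intros)
  moreover have "continuous_on UNIV (\<lambda>p::('a \<Rightarrow> 'k) \<times> ('a \<Rightarrow> 'k). snd p x)"
    by (rule continuous_on_compose2[OF continuous_on_product_coordinates]) (auto intro: continuous_intros)
  ultimately show "continuous_on UNIV (\<lambda>p. c * fst p x + d * snd p x)"
    by (intro continuous_intros)
qed

lemma fconvex_closure:
  fixes S :: "('a \<Rightarrow> 'k::real_normed_field) set"
  assumes "fconvex S"
  shows "fconvex (closure S)"
  unfolding fconvex_def
proof (intro ballI allI impI)
  fix \<sigma> \<tau> and t :: real
  assume "\<sigma> \<in> closure S" "\<tau> \<in> closure S" "0 \<le> t \<and> t \<le> 1"
  define comb where "comb = (\<lambda>p::('a \<Rightarrow> 'k) \<times> ('a \<Rightarrow> 'k). \<lambda>x. of_real t * fst p x + of_real (1 - t) * snd p x)"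
  have cont: "continuous_on UNIV comb"
    unfolding comb_def by (rule continuous_on_pointwise_combination)
  have "comb ` (S \<times> S) \<subseteq> S"
    using assms \<open>0 \<le> t \<and> t \<le> 1\<close> unfolding fconvex_def comb_def by auto
  then have "comb ` closure (S \<times> S) \<subseteq> closure S"
    using closure_subset by (intro image_closure_subset continuous_on_subset[OF cont]) auto
  then have "comb (\<sigma>, \<tau>) \<in> closure S"
    using \<open>\<sigma> \<in> closure S\<close> \<open>\<tau> \<in> closure S\<close> by (auto simp: closure_Times)
  then show "(\<lambda>x. of_real t * \<sigma> x + of_real (1 - t) * \<tau> x) \<in> closure S"
    by (simp add: comb_def)
qed

lemma clco_eq: "F \<subseteq> tdual smul \<Longrightarrow> clco smul F = tdual smul \<inter> closure (dual_co smul F)"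
  unfolding clco_def weak_star_eq_top_of_set closure_of_subtopology
  by (simp add: Int_absorb1[OF dual_co_subset_tdual])

lemma fconvex_clco:
  assumes "F \<subseteq> tdual smul"
  shows "fconvex (clco smul F)"
  unfolding clco_eq[OF assms] by (intro fconvex_Int fconvex_tdual fconvex_closure fconvex_dual_co)

lemma subset_clco:
  assumes "F \<subseteq> tdual smul"
  shows "F \<subseteq> clco smul F"
  unfolding clco_eq[OF assms] using assms subset_dual_co closure_subset by blast

lemma fconvex_eval_preimage:
  fixes K :: "'k::real_normed_field set"
  assumes "convex K"
  shows "fconvex {\<sigma>. \<sigma> A \<in> K}"
  unfolding fconvex_def
proof (intro ballI allI impI CollectI)
  fix \<sigma> \<tau> :: "'a \<Rightarrow> 'k" and t :: real
  assume "\<sigma> \<in> {\<sigma>. \<sigma> A \<in> K}" "\<tau> \<in> {\<sigma>. \<sigma> A \<in> K}" "0 \<le> t \<and> t \<le> 1"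
  then show "of_real t * \<sigma> A + of_real (1 - t) * \<tau> A \<in> K"
    using convexD[OF assms, of "\<sigma> A" "\<tau> A" t "1 - t"] by (simp add: scaleR_conv_of_real)
qed

lemma convex_eval_image:
  fixes C :: "('a \<Rightarrow> 'k::real_normed_field) set"
  assumes "fconvex C"
  shows "convex ((\<lambda>\<sigma>. \<sigma> A) ` C)"
proof (rule convexI)
  fix x y and u v :: real
  assume "x \<in> (\<lambda>\<sigma>. \<sigma> A) ` C" "y \<in> (\<lambda>\<sigma>. \<sigma> A) ` C" "0 \<le> u" "0 \<le> v" "u + v = 1"
  then obtain \<sigma> \<tau> where "\<sigma> \<in> C" "\<tau> \<in> C" "x = \<sigma> A" "y = \<tau> A" "u \<le> 1" "v = 1 - u"
    by auto
  moreover from this have "(\<lambda>x. of_real u * \<sigma> x + of_real (1 - u) * \<tau> x) \<in> C"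
    using assms \<open>0 \<le> u\<close> unfolding fconvex_def by blast
  ultimately show "u *\<^sub>R x + v *\<^sub>R y \<in> (\<lambda>\<sigma>. \<sigma> A) ` C"
    by (force simp: scaleR_conv_of_real)
qed

lemma eval_clco_subset:
  fixes smul :: "'k::real_normed_field \<Rightarrow> 'a::{ab_group_add,t2_space} \<Rightarrow> 'a"
  assumes "F \<subseteq> tdual smul"
  shows "(\<lambda>\<sigma>. \<sigma> A) ` clco smul F \<subseteq> closure (convex hull ((\<lambda>\<sigma>. \<sigma> A) ` F))"
proof -
  define K where "K = closure (convex hull ((\<lambda>\<sigma>. \<sigma> A) ` F))"
  have "(\<lambda>\<sigma>. \<sigma> A) ` F \<subseteq> K"
    unfolding K_def using hull_subset closure_subset by (rule order_trans)
  have "dual_co smul F \<subseteq> tdual smul \<inter> {\<sigma>. \<sigma> A \<in> K}"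
  proof (rule dual_co_minimal)
    show "F \<subseteq> tdual smul \<inter> {\<sigma>. \<sigma> A \<in> K}"
      using assms \<open>(\<lambda>\<sigma>. \<sigma> A) ` F \<subseteq> K\<close> by blast
    show "fconvex (tdual smul \<inter> {\<sigma>. \<sigma> A \<in> K})"
      unfolding K_def
      by (intro fconvex_Int fconvex_tdual fconvex_eval_preimage convex_closure convex_convex_hull)
  qed (rule Int_lower1)
  moreover have "closed {\<sigma>::'a \<Rightarrow> 'k. \<sigma> A \<in> K}"
    using closed_vimage[of K "\<lambda>\<sigma>::'a \<Rightarrow> 'k. \<sigma> A"] continuous_on_product_coordinates[of A]
    unfolding K_def by (simp add: vimage_def)
  ultimately have "closure (dual_co smul F) \<subseteq> {\<sigma>. \<sigma> A \<in> K}"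
    by (intro closure_minimal) auto
  then show ?thesis
    unfolding clco_eq[OF assms] K_def by auto
qed

lemma convex_hull_eval_subset:
  assumes "F \<subseteq> tdual smul"
  shows "convex hull ((\<lambda>\<sigma>. \<sigma> A) ` F) \<subseteq> (\<lambda>\<sigma>. \<sigma> A) ` clco smul F"
  using subset_clco[OF assms] by (intro hull_minimal image_mono convex_eval_image fconvex_clco assms)

lemma dH_clco_le:
  assumes "F \<subseteq> tdual smul" "G \<subseteq> tdual smul"
  shows "dH A (clco smul F) (clco smul G) \<le> dH A F G"
proof -
  have "excess ((\<lambda>\<sigma>. \<sigma> A) ` clco smul F) ((\<lambda>\<sigma>. \<sigma> A) ` clco smul G)
          \<le> excess ((\<lambda>\<sigma>. \<sigma> A) ` F) ((\<lambda>\<sigma>. \<sigma> A) ` G)" if "F \<subseteq> tdual smul" "G \<subseteq> tdual smul"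
    for F G
    using excess_mono[OF eval_clco_subset[OF that(1)] convex_hull_eval_subset[OF that(2)]]
      excess_closure_convex_hull_le by (rule order_trans)
  from this[OF assms] this[OF assms(2,1)] show ?thesis
    unfolding dH_eq_max_excess by (rule max.mono)
qed

lemma Fsets_subset_tdual: "F \<in> Fsets smul \<Longrightarrow> F \<subseteq> tdual smul"
  unfolding Fsets_def using closedin_subset[of "weak_star smul" F]
  by (simp add: weak_star_eq_top_of_set)

lemma clco_in_CFsets:
  assumes "F \<in> Fsets smul"
  shows "clco smul F \<in> CFsets smul"
proof -
  have "F \<subseteq> tdual smul" using assms by (rule Fsets_subset_tdual)
  then have "F \<subseteq> clco smul F" "fconvex (clco smul F)"
    by (rule subset_clco, rule fconvex_clco)
  moreover have "closedin (weak_star smul) (clco smul F)"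
    unfolding clco_def by (rule closedin_closure_of)
  ultimately show ?thesis
    using assms unfolding CFsets_def Fsets_def by auto
qed

lemma clco_eq_self:
  assumes "C \<in> CFsets smul"
  shows "clco smul C = C"
proof -
  have "C \<subseteq> tdual smul" "fconvex C" "closedin (weak_star smul) C"
    using assms Fsets_subset_tdual by (auto simp: CFsets_def Fsets_def)
  then have "dual_co smul C = C"
    by (intro equalityI dual_co_minimal subset_dual_co) auto
  then show ?thesis
    unfolding clco_def using \<open>closedin (weak_star smul) C\<close> by (simp add: closure_of_closedin)
qed

lemma clco_image_Fsets: "clco smul ` Fsets smul = CFsets smul"
proof
  show "clco smul ` Fsets smul \<subseteq> CFsets smul"
    using clco_in_CFsets by blast
  show "CFsets smul \<subseteq> clco smul ` Fsets smul"
  proof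
    fix C assume "C \<in> CFsets smul"
    then have "C = clco smul C" "C \<in> Fsets smul"
      by (simp_all add: clco_eq_self CFsets_def)
    then show "C \<in> clco smul ` Fsets smul" by blast
  qed
qed

lemma continuous_map_clco:
  "continuous_map (hyper_top (Fsets smul)) (hyper_top (CFsets smul)) (clco smul)"
proof (rule continuous_map_hyper_top)
  show "clco smul F \<in> CFsets smul" if "F \<in> Fsets smul" for F
    using that by (rule clco_in_CFsets)
  show "{} \<notin> CFsets smul"
    by (simp add: CFsets_def Fsets_def)
  show "dH A (clco smul F) (clco smul G) \<le> dH A F G" if "F \<in> Fsets smul" "G \<in> Fsets smul" for F G A
    using that by (intro dH_clco_le Fsets_subset_tdual)
qed

theorem proposition3p12:
  fixes smulR :: "real \<Rightarrow> 'x::{ab_group_add,t2_space} \<Rightarrow> 'x"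
    and smulC :: "complex \<Rightarrow> 'y::{ab_group_add,t2_space} \<Rightarrow> 'y"
  shows "(tvs smulR \<and> dual_separates smulR \<longrightarrow>
            clco smulR ` Fsets smulR = CFsets smulR \<and>
            continuous_map (hyper_top (Fsets smulR)) (hyper_top (CFsets smulR)) (clco smulR))
       \<and> (tvs smulC \<and> dual_separates smulC \<longrightarrow>
            clco smulC ` Fsets smulC = CFsets smulC \<and>
            continuous_map (hyper_top (Fsets smulC)) (hyper_top (CFsets smulC)) (clco smulC))"
  by (simp add: clco_image_Fsets continuous_map_clco)

end
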